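(* Fix a finite candidate set $C$ with $|C|=m$, and work on $\mathcal E(C)$, the elections with candidate set $C$. (a) If $\mathcal K$ is a reversal-symmetric $m$-consensus on $\mathcal E(C)$ and $d$ is a reversal-symmetric map $\mathcal E(C)\times\mathcal E(C)\to[0,\infty]$, then $\mathcal R(\mathcal K,d)$ is reversal symmetric, i.e. $\mathcal R(\mathcal K,d)(\mathrm{rev}(E))=\{\mathrm{rev}(r):r\in\mathcal R(\mathcal K,d)(E)\}$ for all $E$. (b) Conversely, if $R$ is a reversal-symmetric social welfare rule on $\mathcal E(C)$ that is distance rationalizable, then $R$ is distance rationalizable with respect to some $(\mathcal K,d)$ with $\mathcal K$ and $d$ both reversal symmetric.
   Context: $L(C)$ is the set of strict linear orders of $C$. An election with candidate set $C$ is $E=(C,V,\pi)$ with $V$ a finite nonempty subset of a fixed countably infinite voter set $V^*$ and $\pi:V\to L(C)$; $\mathcal E(C)$ is the set of these. For $\rho\in L(C)$, $\mathrm{rev}(\rho)$ is the reversed order, and $\mathrm{rev}(C,V,\pi)=(C,V,\mathrm{rev}\circ\pi)$. A social welfare rule on $\mathcal E(C)$ assigns to each $E$ a nonempty subset $R(E)\subseteq L(C)$; it is reversal symmetric if $R(\mathrm{rev}(E))=\mathrm{rev}(R(E))$. An $m$-consensus is a map $\mathcal K$ from $D(\mathcal K)\subseteq\mathcal E(C)$ to $L(C)$, $\mathcal K_r=\mathcal K^{-1}(r)$; it is reversal symmetric if $D(\mathcal K)$ is closed under $\mathrm{rev}$ and $\mathcal K(\mathrm{rev}(E))=\mathrm{rev}(\mathcal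 K(E))$. A map $d$ is reversal symmetric if $d(\mathrm{rev}(E),\mathrm{rev}(E'))=d(E,E')$. A distance is $d:\mathcal E(C)\times\mathcal E(C)\to[0,\infty]$ with $d(E,E)=0$ and the triangle inequality. $d(E,A)=\inf_{F\in A}d(E,F)$ ($\infty$ if $A=\emptyset$), and $\mathcal R(\mathcal K,d)(E)$ is the set of $r\in L(C)$ with $d(E,\mathcal K_r)=\min_{r'\in L(C)}d(E,\mathcal K_{r'})$. $R$ is distance rationalizable with respect to $(\mathcal K,d)$ if $d$ is a distance, $d(x,y)>0$ whenever $x\in\mathcal K_r,y\in\mathcal K_{r'},r\ne r'$, and $R=\mathcal R(\mathcal K,d)$; $R$ is distance rationalizable if some such pair exists. *)

theory Defs
  imports "HOL-Library.Extended_Nonnegative_Real"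
begin

text \<open>Voters: the fixed countably infinite voter set V* is taken to be the type nat.
  Orders are strict relations on the candidate type; an election is a triple
  (C, V, pi) where pi assigns the empty relation outside V (canonical representation).\<close>

type_synonym 'c election = "'c set \<times> nat set \<times> (nat \<Rightarrow> 'c rel)"

definition lin_orders :: "'c set \<Rightarrow> 'c rel set" where
  "lin_orders C = {r. r \<subseteq> C \<times> C \<and> strict_linear_order_on C r}"

definition elections :: "'c set \<Rightarrow> 'c election set" where
  "elections C = {(C', V, \<pi>). C' = C \<and> finite V \<and> V \<noteq> {} \<and>
      (\<forall>v\<in>V. \<pi> v \<in> lin_orders C) \<and> (\<forall>v. v \<notin> V \<longrightarrow> \<pi> v = {})}"

definition rev_order :: "'c rel \<Rightarrow> 'c rel" where
  "rev_order r = r\<inverse>"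

definition rev_elec :: "'c election \<Rightarrow> 'c election" where
  "rev_elec E = (case E of (C, V, \<pi>) \<Rightarrow> (C, V, rev_order \<circ> \<pi>))"

definition swr :: "'c set \<Rightarrow> ('c election \<Rightarrow> 'c rel set) \<Rightarrow> bool" where
  "swr C R \<longleftrightarrow> (\<forall>E\<in>elections C. R E \<noteq> {} \<and> R E \<subseteq> lin_orders C)"

definition swr_rev_sym :: "'c set \<Rightarrow> ('c election \<Rightarrow> 'c rel set) \<Rightarrow> bool" where
  "swr_rev_sym C R \<longleftrightarrow> (\<forall>E\<in>elections C. R (rev_elec E) = rev_order ` R E)"

definition consensus :: "'c set \<Rightarrow> ('c election \<Rightarrow> 'c rel option) \<Rightarrow> bool" where
  "consensus C K \<longleftrightarrow> dom K \<subseteq> elections C \<and> ran K \<subseteq> lin_orders C"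

definition cons_class :: "('c election \<Rightarrow> 'c rel option) \<Rightarrow> 'c rel \<Rightarrow> 'c election set" where
  "cons_class K r = {E. K E = Some r}"

definition cons_rev_sym :: "('c election \<Rightarrow> 'c rel option) \<Rightarrow> bool" where
  "cons_rev_sym K \<longleftrightarrow> (\<forall>E\<in>dom K. rev_elec E \<in> dom K \<and>
      K (rev_elec E) = Some (rev_order (the (K E))))"

definition map_rev_sym :: "'c set \<Rightarrow> ('c election \<Rightarrow> 'c election \<Rightarrow> ennreal) \<Rightarrow> bool" where
  "map_rev_sym C d \<longleftrightarrow> (\<forall>E\<in>elections C. \<forall>E'\<in>elections C.
      d (rev_elec E) (rev_elec E') = d E E')"

definition is_distance :: "'c set \<Rightarrow> ('c election \<Rightarrow> 'c election \<Rightarrow> ennreal) \<Rightarrow> bool" where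
  "is_distance C d \<longleftrightarrow> (\<forall>E\<in>elections C. d E E = 0) \<and>
     (\<forall>x\<in>elections C. \<forall>y\<in>elections C. \<forall>z\<in>elections C. d x z \<le> d x y + d y z)"

text \<open>d(E,A) = inf over A; Inf {} = \<infinity> in ennreal.\<close>
definition set_dist :: "('c election \<Rightarrow> 'c election \<Rightarrow> ennreal) \<Rightarrow> 'c election \<Rightarrow> 'c election set \<Rightarrow> ennreal" where
  "set_dist d E A = (INF F\<in>A. d E F)"

definition rat_rule :: "'c set \<Rightarrow> ('c election \<Rightarrow> 'c rel option) \<Rightarrow>
     ('c election \<Rightarrow> 'c election \<Rightarrow> ennreal) \<Rightarrow> 'c election \<Rightarrow> 'c rel set" where
  "rat_rule C K d E = {r \<in> lin_orders C.
      set_dist d E (cons_class K r) = Min ((\<lambda>r'. set_dist d E (cons_class K r')) ` lin_orders C)}"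

definition dist_rat_wrt :: "'c set \<Rightarrow> ('c election \<Rightarrow> 'c rel set) \<Rightarrow>
     ('c election \<Rightarrow> 'c rel option) \<Rightarrow> ('c election \<Rightarrow> 'c election \<Rightarrow> ennreal) \<Rightarrow> bool" where
  "dist_rat_wrt C R K d \<longleftrightarrow> consensus C K \<and> is_distance C d \<and>
     (\<forall>r r' x y. x \<in> cons_class K r \<longrightarrow> y \<in> cons_class K r' \<longrightarrow> r \<noteq> r' \<longrightarrow> d x y > 0) \<and>
     (\<forall>E\<in>elections C. R E = rat_rule C K d E)"

definition dist_rat :: "'c set \<Rightarrow> ('c election \<Rightarrow> 'c rel set) \<Rightarrow> bool" where
  "dist_rat C R \<longleftrightarrow> (\<exists>K d. dist_rat_wrt C R K d)"

end

theory Submission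
  imports Defs "HOL-Library.Countable_Set"
begin

text \<open>Part (a): reversal maps the consensus class of r onto that of rev r and preserves d,
  so it carries the distances from E to the classes onto those from rev E.

  Part (b): being distance rationalizable w.r.t. K is captured by a combinatorial condition
  on K: consensus rankings win; every other winner t at a coloured election c is the
  consensus of infinitely many elections whose winners lie in R c; and every winner at an
  uncoloured election without a full tie is the consensus of some election with fewer
  winners. Conversely such a K rationalizes R through an explicit distance built from weights
  that tend to 0 along infinite sets of elections, and this distance is reversal symmetric
  whenever K and R are. It remains to make K reversal symmetric: of each pair E, rev E whose
  colours disagree keep one and give the other the reversed colour. As there are only
  countably many elections, a diagonal choice keeps infinitely many members of each of the
  countably many infinite families the condition requires.\<close>

lemma rev_order_rev_order [simp]: "rev_order (rev_order r) = r"
  by (simp add: rev_order_def)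

lemma inj_rev_order: "inj rev_order"
  by (metis injI rev_order_rev_order)

lemma rev_elec_rev_elec [simp]: "rev_elec (rev_elec E) = E"
  by (cases E) (auto simp: rev_elec_def comp_def)

lemma inj_rev_elec: "inj rev_elec"
  by (metis injI rev_elec_rev_elec)

lemma rev_order_image_eq_vimage: "rev_order ` A = rev_order -` A"
  by (auto simp: image_iff) (metis rev_order_rev_order)

lemma rev_order_in_lin_orders: "r \<in> lin_orders C \<Longrightarrow> rev_order r \<in> lin_orders C"
  unfolding lin_orders_def rev_order_def strict_linear_order_on_def
  by (auto simp: irrefl_def total_on_def trans_def)

lemma rev_order_image_lin_orders [simp]: "rev_order ` lin_orders C = lin_orders C"
  using rev_order_in_lin_orders by (auto intro!: image_eqI[of _ rev_order "rev_order _"])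

lemma rev_elec_in_elections: "E \<in> elections C \<Longrightarrow> rev_elec E \<in> elections C"
  by (cases E) (auto simp: elections_def rev_elec_def rev_order_in_lin_orders, simp add: rev_order_def)

lemma rev_elec_in_elections_iff [simp]: "rev_elec E \<in> elections C \<longleftrightarrow> E \<in> elections C"
  by (metis rev_elec_in_elections rev_elec_rev_elec)

lemma finite_lin_orders: "finite C \<Longrightarrow> finite (lin_orders C)"
  by (rule finite_subset[of _ "Pow (C \<times> C)"]) (auto simp: lin_orders_def)

lemma swr_rev_symD: "swr_rev_sym C R \<Longrightarrow> E \<in> elections C \<Longrightarrow> R (rev_elec E) = rev_order ` R E"
  by (simp add: swr_rev_sym_def)

lemma swr_rev_sym_subset_iff:
  assumes "swr_rev_sym C R" "E \<in> elections C" "E' \<in> elections C"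
  shows "R (rev_elec E) \<subseteq> R (rev_elec E') \<longleftrightarrow> R E \<subseteq> R E'"
  using assms by (simp add: swr_rev_symD inj_image_subset_iff[OF inj_rev_order])

lemma cons_class_subset_elections: "consensus C K \<Longrightarrow> cons_class K r \<subseteq> elections C"
  unfolding consensus_def cons_class_def by auto

lemma cons_rev_symD:
  "cons_rev_sym K \<Longrightarrow> K E = Some r \<Longrightarrow> K (rev_elec E) = Some (rev_order r)"
  unfolding cons_rev_sym_def by (metis domI option.sel)

lemma cons_class_rev_order:
  assumes "cons_rev_sym K"
  shows "cons_class K (rev_order r) = rev_elec ` cons_class K r"
proof
  show "rev_elec ` cons_class K r \<subseteq> cons_class K (rev_order r)"
    using cons_rev_symD[OF assms] by (auto simp: cons_class_def)
  show "cons_class K (rev_order r) \<subseteq> rev_elec ` cons_class K r"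
  proof
    fix G assume "G \<in> cons_class K (rev_order r)"
    hence "rev_elec G \<in> cons_class K r"
      using cons_rev_symD[OF assms, of G] by (simp add: cons_class_def)
    thus "G \<in> rev_elec ` cons_class K r" by (metis image_eqI rev_elec_rev_elec)
  qed
qed

subsection \<open>Reversal symmetry is inherited by the rationalized rule\<close>

lemma set_dist_rev_elec:
  assumes "consensus C K" "cons_rev_sym K" "map_rev_sym C d" "E \<in> elections C"
  shows "set_dist d (rev_elec E) (cons_class K (rev_order r)) = set_dist d E (cons_class K r)"
proof -
  have "set_dist d (rev_elec E) (cons_class K (rev_order r))
      = (INF F\<in>cons_class K r. d (rev_elec E) (rev_elec F))"
    unfolding set_dist_def cons_class_rev_order[OF assms(2)] by (simp add: image_image)
  also have "\<dots> = (INF F\<in>cons_class K r. d E F)"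
    using cons_class_subset_elections[OF assms(1)] assms(3,4)
    unfolding map_rev_sym_def by (intro INF_cong) auto
  finally show ?thesis by (simp add: set_dist_def)
qed

lemma rat_rule_rev_elec:
  assumes "consensus C K" "cons_rev_sym K" "map_rev_sym C d" "E \<in> elections C"
  shows "rat_rule C K d (rev_elec E) = rev_order ` rat_rule C K d E"
proof -
  let ?L = "lin_orders C"
  let ?f = "\<lambda>r. set_dist d (rev_elec E) (cons_class K r)"
  let ?g = "\<lambda>r. set_dist d E (cons_class K r)"
  have fg: "?f r = ?g (rev_order r)" for r
    using set_dist_rev_elec[OF assms, of "rev_order r"] by simp
  have "?f ` ?L = ?g ` rev_order ` ?L"
    unfolding fg image_image ..
  hence "rat_rule C K d (rev_elec E) = {r \<in> ?L. ?g (rev_order r) = Min (?g ` ?L)}"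
    unfolding rat_rule_def fg by simp
  also have "\<dots> = rev_order -` {r \<in> ?L. ?g r = Min (?g ` ?L)}"
    by (auto intro: rev_order_in_lin_orders dest: rev_order_in_lin_orders)
  also have "\<dots> = rev_order ` {r \<in> ?L. ?g r = Min (?g ` ?L)}"
    by (rule rev_order_image_eq_vimage[symmetric])
  finally show ?thesis by (simp add: rat_rule_def)
qed

subsection \<open>A combinatorial characterization of rationalizing consensuses\<close>

lemma le_add_INF:
  fixes x a :: ennreal
  assumes "\<And>G. G \<in> A \<Longrightarrow> x \<le> a + f G"
  shows "x \<le> a + (INF G\<in>A. f G)"
proof (rule ennreal_le_epsilon)
  fix e :: real assume lt: "a + (INF G\<in>A. f G) < top" and e: "0 < e"
  have finite_INF: "(INF G\<in>A. f G) < top" using lt by (simp add: top.not_eq_extremum)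
  have "(INF G\<in>A. f G) < (INF G\<in>A. f G) + ennreal e"
    using finite_INF e by (cases "(INF G\<in>A. f G)" rule: ennreal_cases)
      (auto simp flip: ennreal_plus simp: ennreal_less_iff)
  then obtain G where G: "G \<in> A" "f G < (INF G\<in>A. f G) + ennreal e"
    by (auto simp: INF_less_iff)
  have "x \<le> a + f G" using assms G(1) .
  also have "\<dots> \<le> a + ((INF G\<in>A. f G) + ennreal e)" using G(2) by (intro add_left_mono) simp
  finally show "x \<le> a + (INF G\<in>A. f G) + ennreal e" by (simp add: add.assoc)
qed

lemma INF_in_image_finite:
  fixes f :: "'a \<Rightarrow> 'b :: complete_linorder"
  assumes "finite A" "A \<noteq> {}"
  shows "(INF x\<in>A. f x) \<in> f ` A"
  using assms by (metis Min_Inf Min_in finite_imageI image_is_empty)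

lemma INF_pos_finite:
  fixes f :: "'a \<Rightarrow> ennreal"
  assumes "finite A" "\<And>x. x \<in> A \<Longrightarrow> 0 < f x"
  shows "0 < (INF x\<in>A. f x)"
  using assms INF_in_image_finite[OF assms(1), of f] by (cases "A = {}") auto

text \<open>An election E in dom K is called coloured (with K E).\<close>

definition rationalizing_consensus ::
    "'c set \<Rightarrow> ('c election \<Rightarrow> 'c rel set) \<Rightarrow> ('c election \<Rightarrow> 'c rel option) \<Rightarrow> bool" where
  "rationalizing_consensus C R K \<longleftrightarrow> consensus C K \<and>
     (\<forall>c u. K c = Some u \<longrightarrow> u \<in> R c) \<and>
     (\<forall>c u t. K c = Some u \<longrightarrow> t \<in> R c \<longrightarrow> t \<noteq> u \<longrightarrow>
        infinite {c'. K c' = Some t \<and> R c' \<subseteq> R c}) \<and>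
     (\<forall>a t. a \<in> elections C \<longrightarrow> K a = None \<longrightarrow> R a \<noteq> lin_orders C \<longrightarrow> t \<in> R a \<longrightarrow>
        (\<exists>c. K c = Some t \<and> R c \<subseteq> R a))"

lemma
  assumes "rationalizing_consensus C R K"
  shows rationalizing_consensus_consensus: "consensus C K"
    and rationalizing_consensus_in_R: "K c = Some u \<Longrightarrow> u \<in> R c"
    and rationalizing_consensus_infinite: "K c = Some u \<Longrightarrow> t \<in> R c \<Longrightarrow> t \<noteq> u \<Longrightarrow>
          infinite {c'. K c' = Some t \<and> R c' \<subseteq> R c}"
    and rationalizing_consensus_witness: "a \<in> elections C \<Longrightarrow> K a = None \<Longrightarrow>
          R a \<noteq> lin_orders C \<Longrightarrow> t \<in> R a \<Longrightarrow> \<exists>c. K c = Some t \<and> R c \<subseteq> R a"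
  using assms unfolding rationalizing_consensus_def by (simp_all del: split_paired_All split_paired_Ex)

context
  fixes C :: "'c set" and R K d
  assumes fin: "finite C" and swr: "swr C R" and rat: "dist_rat_wrt C R K d"
begin

private abbreviation class_dist :: "'c election \<Rightarrow> 'c rel \<Rightarrow> ennreal" where
  "class_dist E r \<equiv> set_dist d E (cons_class K r)"

private lemma consensus: "consensus C K"
  using rat by (simp add: dist_rat_wrt_def)

private lemma in_elections: "K F = Some u \<Longrightarrow> F \<in> elections C"
  using consensus unfolding consensus_def by auto

private lemma in_lin_orders: "K F = Some u \<Longrightarrow> u \<in> lin_orders C"
  using consensus ranI unfolding consensus_def by fast

private lemma separating: "K x = Some r \<Longrightarrow> K y = Some r' \<Longrightarrow> r \<noteq> r' \<Longrightarrow> 0 < d x y"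
  using rat unfolding dist_rat_wrt_def cons_class_def by blast

private lemma R_subset: "E \<in> elections C \<Longrightarrow> R E \<subseteq> lin_orders C"
  using swr by (simp add: swr_def)

private lemma class_dist_triangle:
  assumes "E \<in> elections C" "F \<in> elections C"
  shows "class_dist E r \<le> d E F + class_dist F r"
  unfolding set_dist_def
proof (rule le_add_INF)
  fix G assume G: "G \<in> cons_class K r"
  hence "G \<in> elections C" using cons_class_subset_elections[OF consensus] by blast
  hence "d E G \<le> d E F + d F G"
    using rat assms unfolding dist_rat_wrt_def is_distance_def by simp
  moreover have "(INF G\<in>cons_class K r. d E G) \<le> d E G" using G by (rule INF_lower)
  ultimately show "(INF G\<in>cons_class K r. d E G) \<le> d E F + d F G" by simp
qed

private lemma class_dist_self: "K F = Some u \<Longrightarrow> class_dist F u = 0"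
proof -
  assume F: "K F = Some u"
  have "class_dist F u \<le> d F F"
    unfolding set_dist_def using F by (intro INF_lower) (simp add: cons_class_def)
  also have "d F F = 0"
    using rat in_elections[OF F] by (simp add: dist_rat_wrt_def is_distance_def)
  finally show ?thesis by simp
qed

private lemma R_coloured: "K F = Some u \<Longrightarrow> R F = {r \<in> lin_orders C. class_dist F r = 0}"
proof -
  assume F: "K F = Some u"
  have "Min ((\<lambda>r. class_dist F r) ` lin_orders C) \<le> class_dist F u"
    using in_lin_orders[OF F] finite_lin_orders[OF fin] by (intro Min_le) auto
  hence "Min ((\<lambda>r. class_dist F r) ` lin_orders C) = 0"
    using class_dist_self[OF F] by simp
  thus ?thesis
    using rat in_elections[OF F] by (simp add: dist_rat_wrt_def rat_rule_def)
qed

private lemma consensus_in_R: "K F = Some u \<Longrightarrow> u \<in> R F"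
  using R_coloured class_dist_self in_lin_orders by auto

text \<open>Otherwise c would be a positive distance away from these finitely many elections and,
  by the triangle inequality, from every other t-coloured one, which has a winner losing
  at c; but t wins at c, so the t-class is at distance 0 from c.\<close>

private lemma infinite_dominated_class:
  assumes c: "K c = Some u" and t: "t \<in> R c" and tu: "t \<noteq> u"
  shows "infinite {c'. K c' = Some t \<and> R c' \<subseteq> R c}"
proof
  let ?S = "{c'. K c' = Some t \<and> R c' \<subseteq> R c}"
  let ?L = "lin_orders C"
  assume fin_S: "finite ?S"
  define \<gamma> where "\<gamma> = (INF u'\<in>?L - R c. class_dist c u')"
  define \<delta> where "\<delta> = (INF c'\<in>?S. d c c')"
  have "0 < \<gamma>" unfolding \<gamma>_def
    using R_coloured[OF c] finite_lin_orders[OF fin]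
    by (intro INF_pos_finite) (auto simp: zero_less_iff_neq_zero)
  moreover have "0 < \<delta>" unfolding \<delta>_def
    using separating c tu by (intro INF_pos_finite[OF fin_S]) auto
  moreover have "min \<gamma> \<delta> \<le> class_dist c t" unfolding set_dist_def
  proof (rule INF_greatest)
    fix G assume "G \<in> cons_class K t"
    hence G: "K G = Some t" by (simp add: cons_class_def)
    show "min \<gamma> \<delta> \<le> d c G"
    proof (cases "G \<in> ?S")
      case True
      hence "\<delta> \<le> d c G" unfolding \<delta>_def by (rule INF_lower)
      thus ?thesis by (simp add: min_le_iff_disj)
    next
      case False
      then obtain u' where u': "u' \<in> R G" "u' \<notin> R c" using G by auto
      have "\<gamma> \<le> class_dist c u'"
        unfolding \<gamma>_def using u' R_subset[OF in_elections[OF G]] by (intro INF_lower) auto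
      also have "\<dots> \<le> d c G + class_dist G u'"
        using class_dist_triangle[OF in_elections[OF c] in_elections[OF G]] .
      also have "class_dist G u' = 0" using R_coloured[OF G] u' by auto
      finally show ?thesis by (simp add: min_le_iff_disj)
    qed
  qed
  moreover have "class_dist c t = 0" using R_coloured[OF c] t by auto
  ultimately show False by (simp add: min_def split: if_splits)
qed

private lemma dominated_class_witness:
  assumes a: "a \<in> elections C" and RL: "R a \<noteq> lin_orders C" and t: "t \<in> R a"
  shows "\<exists>c. K c = Some t \<and> R c \<subseteq> R a"
proof -
  let ?L = "lin_orders C"
  let ?M = "Min ((\<lambda>r. class_dist a r) ` ?L)"
  have Ra: "R a = {r \<in> ?L. class_dist a r = ?M}"
    using rat a by (simp add: dist_rat_wrt_def rat_rule_def)
  define \<gamma> where "\<gamma> = (INF u'\<in>?L - R a. class_dist a u')"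
  have "\<gamma> \<in> (\<lambda>u'. class_dist a u') ` (?L - R a)"
    unfolding \<gamma>_def using finite_lin_orders[OF fin] RL R_subset[OF a]
    by (intro INF_in_image_finite) auto
  moreover have "?M < class_dist a u'" if u': "u' \<in> ?L - R a" for u'
  proof -
    have "?M \<le> class_dist a u'" using u' finite_lin_orders[OF fin] by (intro Min_le) auto
    moreover have "class_dist a u' \<noteq> ?M" using u' Ra by auto
    ultimately show ?thesis by simp
  qed
  ultimately have "?M < \<gamma>" by auto
  moreover have "class_dist a t = ?M" using t Ra by auto
  ultimately have "(INF G\<in>cons_class K t. d a G) < \<gamma>" by (simp add: set_dist_def)
  then obtain G where G: "K G = Some t" "d a G < \<gamma>"
    by (auto simp: INF_less_iff cons_class_def)
  have "R G \<subseteq> R a"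
  proof
    fix u' assume u': "u' \<in> R G"
    show "u' \<in> R a"
    proof (rule ccontr)
      assume "u' \<notin> R a"
      hence "\<gamma> \<le> class_dist a u'"
        unfolding \<gamma>_def using u' R_subset[OF in_elections[OF G(1)]] by (intro INF_lower) auto
      also have "\<dots> \<le> d a G + class_dist G u'"
        using class_dist_triangle[OF a in_elections[OF G(1)]] .
      also have "class_dist G u' = 0" using R_coloured[OF G(1)] u' by auto
      finally show False using G(2) by simp
    qed
  qed
  thus ?thesis using G by blast
qed

lemma rationalizing_consensus_if_dist_rat_wrt: "rationalizing_consensus C R K"
  unfolding rationalizing_consensus_def
  using consensus consensus_in_R infinite_dominated_class dominated_class_witness by blast

end

lemma countable_elections:
  assumes "finite C" shows "countable (elections C)"
proof -
  define g where "g E = (fst (snd E), map (snd (snd E)) (sorted_list_of_set (fst (snd E))))"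
    for E :: "'a election"
  have "countable ((Collect finite :: nat set set) \<times> lists (lin_orders C))"
    using finite_lin_orders[OF assms]
    by (intro countable_SIGMA countable_Collect_finite countable_lists countable_finite)
  moreover have "g ` elections C \<subseteq> (Collect finite :: nat set set) \<times> lists (lin_orders C)"
    unfolding g_def elections_def by auto
  ultimately have "countable (g ` elections C)" by (rule countable_subset[rotated])
  moreover have "inj_on g (elections C)"
  proof (rule inj_onI)
    fix E E' assume E: "E \<in> elections C" and E': "E' \<in> elections C" and eq: "g E = g E'"
    obtain V \<pi> where Ed: "E = (C, V, \<pi>)" "finite V" "\<forall>v. v \<notin> V \<longrightarrow> \<pi> v = {}"
      using E unfolding elections_def by auto
    obtain V' \<pi>' where Ed': "E' = (C, V', \<pi>')" "\<forall>v. v \<notin> V' \<longrightarrow> \<pi>' v = {}"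
      using E' unfolding elections_def by auto
    have V: "V = V'" using eq Ed Ed' unfolding g_def by simp
    hence "map \<pi> (sorted_list_of_set V) = map \<pi>' (sorted_list_of_set V)"
      using eq Ed Ed' unfolding g_def by simp
    hence "\<forall>v\<in>V. \<pi> v = \<pi>' v" using Ed(2) by (simp add: map_eq_conv)
    hence "\<pi> = \<pi>'" using Ed Ed' V by (metis ext)
    thus "E = E'" using Ed Ed' V by simp
  qed
  ultimately show ?thesis by (rule countable_image_inj_on)
qed

definition election_weight :: "'c set \<Rightarrow> 'c election \<Rightarrow> ennreal" where
  "election_weight C c = ennreal (1 / real (Suc (to_nat_on (elections C) c
      + to_nat_on (elections C) (rev_elec c))))"

lemma election_weight_pos: "0 < election_weight C c"
  unfolding election_weight_def by simp

lemma election_weight_rev_elec: "election_weight C (rev_elec c) = election_weight C c"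
  unfolding election_weight_def by (simp add: add.commute)

text \<open>The enumeration of the countable set of elections is injective, so along an infinite
  set of elections the weights become arbitrarily small.\<close>

lemma INF_election_weight_infinite:
  assumes "finite C" "infinite S" "S \<subseteq> elections C"
  shows "(INF c\<in>S. election_weight C c) = 0"
proof -
  let ?n = "to_nat_on (elections C)"
  have "(INF c\<in>S. election_weight C c) \<le> ennreal e" if e: "0 < e" for e :: real
  proof -
    obtain N :: nat where N: "1 / real (Suc N) < e"
      using e by (metis nat_approx_posE)
    have "inj_on ?n S"
      using inj_on_to_nat_on[OF countable_elections[OF assms(1)]] assms(3) inj_on_subset by blast
    hence "infinite (?n ` S)" using assms(2) finite_imageD by blast
    then obtain c where c: "c \<in> S" "N \<le> ?n c"
      by (metis finite_nat_set_iff_bounded_le image_iff nat_le_linear)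
    have "1 / real (Suc (?n c + ?n (rev_elec c))) \<le> 1 / real (Suc N)"
      using c(2) by (intro divide_left_mono) auto
    hence "election_weight C c \<le> ennreal e"
      unfolding election_weight_def using N by (intro ennreal_leI) linarith
    moreover have "(INF c\<in>S. election_weight C c) \<le> election_weight C c"
      using c by (intro INF_lower)
    ultimately show ?thesis by simp
  qed
  thus ?thesis by (metis add_0 ennreal_le_epsilon le_zero_eq)
qed

text \<open>From a coloured
  election the weights give distance 0 to the classes of the infinite families required by
  rationalizing_consensus; from an uncoloured one all reachable classes are at distance 1.\<close>

definition witness_distance :: "'c set \<Rightarrow> ('c election \<Rightarrow> 'c rel set) \<Rightarrow>
    ('c election \<Rightarrow> 'c rel option) \<Rightarrow> 'c election \<Rightarrow> 'c election \<Rightarrow> ennreal" where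
  "witness_distance C R K a c =
     (if a = c then 0
      else if c \<in> dom K \<and> R c \<subseteq> R a then
        (if a \<in> dom K then election_weight C c else if R a \<noteq> lin_orders C then 1 else top)
      else top)"

lemma witness_distance_pos: "x \<noteq> y \<Longrightarrow> 0 < witness_distance C R K x y"
  by (simp add: witness_distance_def election_weight_pos)

lemma is_distance_witness_distance: "is_distance C (witness_distance C R K)"
  unfolding is_distance_def
proof (intro conjI ballI)
  fix E show "witness_distance C R K E E = 0" by (simp add: witness_distance_def)
next
  fix x y z
  let ?d = "witness_distance C R K"
  show "?d x z \<le> ?d x y + ?d y z"
  proof (cases "x = z \<or> x = y \<or> y = z \<or> ?d x y = top \<or> ?d y z = top")
    case True thus ?thesis by (auto simp: witness_distance_def)
  next
    case False
    hence "z \<in> dom K" "R z \<subseteq> R x" "x \<in> dom K \<or> R x \<noteq> lin_orders C"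
      by (auto simp: witness_distance_def split: if_splits)
    hence "?d x z = (if x \<in> dom K then ?d y z else ?d x y)"
      using False by (auto simp: witness_distance_def split: if_splits)
    thus ?thesis by (simp add: add_increasing add_increasing2)
  qed
qed

lemma map_rev_sym_witness_distance:
  assumes "swr_rev_sym C R" "cons_rev_sym K"
  shows "map_rev_sym C (witness_distance C R K)"
  unfolding map_rev_sym_def
proof (intro ballI)
  fix E E' assume E: "E \<in> elections C" and E': "E' \<in> elections C"
  have "rev_elec c \<in> dom K \<longleftrightarrow> c \<in> dom K" for c
    using assms(2) unfolding cons_rev_sym_def by (metis rev_elec_rev_elec)
  moreover have "R (rev_elec E') \<subseteq> R (rev_elec E) \<longleftrightarrow> R E' \<subseteq> R E"
    using swr_rev_sym_subset_iff[OF assms(1) E' E] .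
  moreover have "R (rev_elec E) = lin_orders C \<longleftrightarrow> R E = lin_orders C"
    using swr_rev_symD[OF assms(1) E] inj_image_eq_iff[OF inj_rev_order, of "R E" "lin_orders C"]
    by simp
  ultimately show "witness_distance C R K (rev_elec E) (rev_elec E') = witness_distance C R K E E'"
    unfolding witness_distance_def
    by (simp add: inj_eq[OF inj_rev_elec] election_weight_rev_elec)
qed

lemma minimizers_eq:
  fixes f :: "'r \<Rightarrow> 'b :: linorder"
  assumes "finite L" "A \<subseteq> L" "A \<noteq> {}" "\<And>r. r \<in> A \<Longrightarrow> f r = \<alpha>"
    "\<And>r. r \<in> L \<Longrightarrow> r \<notin> A \<Longrightarrow> \<alpha> < f r"
  shows "{r \<in> L. f r = Min (f ` L)} = A"
proof -
  obtain a where a: "a \<in> A" using assms(3) by blast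
  have "Min (f ` L) = \<alpha>"
  proof (rule Min_eqI)
    show "finite (f ` L)" using assms(1) by simp
    show "\<alpha> \<in> f ` L" using a assms(2,4) by (metis image_eqI subsetD)
  next
    fix y assume "y \<in> f ` L"
    then obtain r where "r \<in> L" "y = f r" by blast
    thus "\<alpha> \<le> y" using assms(4,5)[of r] by (cases "r \<in> A") auto
  qed
  thus ?thesis using assms by fastforce
qed

context
  fixes C :: "'c set" and R K
  assumes fin: "finite C" and swr: "swr C R" and rat: "rationalizing_consensus C R K"
begin

private abbreviation witness_class_dist :: "'c election \<Rightarrow> 'c rel \<Rightarrow> ennreal" where
  "witness_class_dist E r \<equiv> set_dist (witness_distance C R K) E (cons_class K r)"

private lemma witness_class_dist_top_outside_R:
  assumes "r \<notin> R E"
  shows "witness_class_dist E r = top"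
  unfolding set_dist_def INF_top_conv
proof
  fix c assume "c \<in> cons_class K r"
  hence "r \<in> R c" using rationalizing_consensus_in_R[OF rat] by (simp add: cons_class_def)
  hence "c \<noteq> E" "\<not> R c \<subseteq> R E" using assms by auto
  thus "witness_distance C R K E c = top" by (simp add: witness_distance_def)
qed

private lemma rat_rule_coloured:
  assumes E: "E \<in> elections C" and u: "K E = Some u"
  shows "rat_rule C K (witness_distance C R K) E = R E"
proof -
  have zero: "witness_class_dist E r = 0" if r: "r \<in> R E" for r
  proof (cases "r = u")
    case True
    have "witness_class_dist E r \<le> witness_distance C R K E E" unfolding set_dist_def
      using True u by (intro INF_lower) (simp add: cons_class_def)
    thus ?thesis by (simp add: witness_distance_def)
  next
    case False
    let ?S = "{c'. K c' = Some r \<and> R c' \<subseteq> R E}"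
    have "witness_class_dist E r \<le> (INF c\<in>?S. witness_distance C R K E c)" unfolding set_dist_def
      by (rule INF_superset_mono) (auto simp: cons_class_def)
    also have "\<dots> = (INF c\<in>?S. election_weight C c)"
      using u False by (intro INF_cong) (auto simp: witness_distance_def)
    also have "\<dots> = 0"
    proof (rule INF_election_weight_infinite[OF fin])
      show "infinite ?S" using rationalizing_consensus_infinite[OF rat u r False] .
      show "?S \<subseteq> elections C"
        using rationalizing_consensus_consensus[OF rat] by (auto simp: consensus_def)
    qed
    finally show ?thesis by simp
  qed
  show ?thesis unfolding rat_rule_def
    using swr E zero witness_class_dist_top_outside_R u
    by (intro minimizers_eq[where \<alpha> = 0] finite_lin_orders fin) (auto simp: swr_def)
qed

private lemma rat_rule_uncoloured:
  assumes E: "E \<in> elections C" and u: "K E = None"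
  shows "rat_rule C K (witness_distance C R K) E = R E"
proof (cases "R E = lin_orders C")
  case True
  hence "witness_class_dist E r = top" for r
    using u unfolding set_dist_def INF_top_conv
    by (auto simp: witness_distance_def cons_class_def)
  thus ?thesis unfolding rat_rule_def
    using True swr E by (intro minimizers_eq[where \<alpha> = top] finite_lin_orders fin) (auto simp: swr_def)
next
  case False
  have one: "witness_class_dist E r = 1" if r: "r \<in> R E" for r
  proof (rule antisym)
    obtain c where c: "K c = Some r" "R c \<subseteq> R E"
      using rationalizing_consensus_witness[OF rat E u False r] by blast
    hence "witness_distance C R K E c = 1" using u False by (auto simp: witness_distance_def)
    moreover have "witness_class_dist E r \<le> witness_distance C R K E c" unfolding set_dist_def
      using c by (intro INF_lower) (simp add: cons_class_def)
    ultimately show "witness_class_dist E r \<le> 1" by simp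
    show "1 \<le> witness_class_dist E r" unfolding set_dist_def
      using u False by (intro INF_greatest) (auto simp: witness_distance_def cons_class_def)
  qed
  show ?thesis unfolding rat_rule_def
    using swr E one witness_class_dist_top_outside_R u
    by (intro minimizers_eq[where \<alpha> = 1] finite_lin_orders fin) (auto simp: swr_def)
qed

lemma dist_rat_wrt_witness_distance: "dist_rat_wrt C R K (witness_distance C R K)"
  unfolding dist_rat_wrt_def
proof (intro conjI allI impI ballI)
  show "consensus C K" using rat by (simp add: rationalizing_consensus_def)
  show "is_distance C (witness_distance C R K)" by (rule is_distance_witness_distance)
next
  fix r r' x y
  assume "x \<in> cons_class K r" "y \<in> cons_class K r'" "r \<noteq> r'"
  hence "x \<noteq> y" by (auto simp: cons_class_def)
  thus "0 < witness_distance C R K x y" by (rule witness_distance_pos)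
next
  fix E assume "E \<in> elections C"
  thus "R E = rat_rule C K (witness_distance C R K) E"
    using rat_rule_coloured rat_rule_uncoloured by (cases "K E") auto
qed

end

subsection \<open>Symmetrizing a rationalizing consensus\<close>

lemma involution_orientation_extend:
  assumes inv: "\<And>x. x \<in> P \<Longrightarrow> f x \<in> P \<and> f (f x) = x \<and> f x \<noteq> x"
    and Y: "Y \<subseteq> P" "\<And>x. x \<in> Y \<Longrightarrow> f x \<notin> Y"
  obtains H where "Y \<subseteq> H" "\<And>x. x \<in> P \<Longrightarrow> x \<in> H \<longleftrightarrow> f x \<notin> H"
proof
  define H where "H = Y \<union> {x \<in> P. x \<notin> Y \<and> f x \<notin> Y \<and> x = (SOME z. z \<in> {x, f x})}"
  show "Y \<subseteq> H" unfolding H_def by blast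
  fix x assume x: "x \<in> P"
  have fx: "f x \<in> P" "f (f x) = x" "f x \<noteq> x" using inv[OF x] by auto
  show "x \<in> H \<longleftrightarrow> f x \<notin> H"
  proof (cases "x \<in> Y \<or> f x \<in> Y")
    case True thus ?thesis using Y(2) fx unfolding H_def by auto
  next
    case False
    define s where "s = (SOME z. z \<in> {x, f x})"
    have s: "s \<in> {x, f x}" unfolding s_def by (rule someI[of _ x]) simp
    have "{f x, f (f x)} = {x, f x}" using fx by auto
    hence s_sym: "(SOME z. z \<in> {f x, f (f x)}) = s" unfolding s_def by simp
    have "x \<in> H \<longleftrightarrow> x = s" using x False unfolding H_def s_def by auto
    moreover have "f x \<in> H \<longleftrightarrow> f x = s" using fx False s_sym unfolding H_def by auto
    ultimately show ?thesis using s fx by auto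
  qed
qed

text \<open>A diagonal enumeration: the n-th element is taken from the set with index
  fst (prod_decode n), avoiding all earlier elements and their images.\<close>

lemma involution_avoiding_sequence:
  assumes inv: "\<And>x. x \<in> P \<Longrightarrow> f x \<in> P \<and> f (f x) = x \<and> f x \<noteq> x"
    and F: "\<And>k. infinite (F k)" "\<And>k. F k \<subseteq> P"
  obtains y :: "nat \<Rightarrow> 'a" where "inj y" "\<And>k j. y (prod_encode (k, j)) \<in> F k"
    "\<And>m n. f (y m) \<noteq> y n" "range y \<subseteq> P"
proof
  define pick where "pick n X = (SOME x. x \<in> F (fst (prod_decode n)) \<and> x \<notin> X \<and> f x \<notin> X)"
    for n X
  have pick: "pick n X \<in> F (fst (prod_decode n)) \<and> pick n X \<notin> X \<and> f (pick n X) \<notin> X"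
    if "finite X" for n X
  proof -
    let ?k = "fst (prod_decode n)"
    obtain x where x: "x \<in> F ?k" "x \<notin> X \<union> f ` X"
      using infinite_imp_nonempty[of "F ?k - (X \<union> f ` X)"] F(1) \<open>finite X\<close> by auto
    have "x \<in> P" using x(1) F(2) by blast
    hence "f (f x) = x" using inv by blast
    hence "f x \<notin> X" using x(2) by (metis UnCI imageI)
    hence "\<exists>x. x \<in> F ?k \<and> x \<notin> X \<and> f x \<notin> X" using x by blast
    thus ?thesis unfolding pick_def by (rule someI_ex)
  qed
  define Xs where "Xs = rec_nat {} (\<lambda>n X. insert (pick n X) X)"
  define y where "y n = pick n (Xs n)" for n
  have Xs: "Xs n = y ` {..<n}" for n
    by (induction n) (simp_all add: Xs_def y_def lessThan_Suc)
  have y_pick: "pick n (y ` {..<n}) = y n" for n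
    unfolding y_def[of n] by (simp only: Xs)
  have "y n \<in> F (fst (prod_decode n)) \<and> y n \<notin> y ` {..<n} \<and> f (y n) \<notin> y ` {..<n}" for n
    using pick[of "y ` {..<n}" n] unfolding y_pick by (meson finite_imageI finite_lessThan)
  hence y: "y n \<in> F (fst (prod_decode n))" "y n \<notin> y ` {..<n}" "f (y n) \<notin> y ` {..<n}" for n
    by blast+
  show yP: "range y \<subseteq> P" using y(1) F(2) by blast
  show "y (prod_encode (k, j)) \<in> F k" for k j using y(1)[of "prod_encode (k, j)"] by simp
  show "inj y"
  proof (rule linorder_injI)
    fix m n :: nat assume "m < n"
    thus "y m \<noteq> y n" using y(2)[of n] by (metis imageI lessThan_iff)
  qed
  show "f (y m) \<noteq> y n" for m n
  proof
    assume eq: "f (y m) = y n"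
    hence "f (y n) = y m" using inv yP by (metis range_subsetD)
    thus False using eq y(3)[of m] y(3)[of n] inv yP
      by (cases m n rule: linorder_cases) (auto dest: range_subsetD)
  qed
qed

lemma involution_orientation_dense:
  assumes inv: "\<And>x. x \<in> P \<Longrightarrow> f x \<in> P \<and> f (f x) = x \<and> f x \<noteq> x"
    and I: "countable I" "\<And>i. i \<in> I \<Longrightarrow> infinite (S i)" "\<And>i. i \<in> I \<Longrightarrow> S i \<subseteq> P"
  shows "\<exists>H. (\<forall>x\<in>P. x \<in> H \<longleftrightarrow> f x \<notin> H) \<and> (\<forall>i\<in>I. infinite (S i \<inter> H))"
proof (cases "I = {}")
  case True
  obtain H where "\<And>x. x \<in> P \<Longrightarrow> x \<in> H \<longleftrightarrow> f x \<notin> H"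
    using involution_orientation_extend[OF inv empty_subsetI] by (metis empty_iff)
  thus ?thesis using True by blast
next
  case False
  let ?F = "\<lambda>k. S (from_nat_into I k)"
  have F: "infinite (?F k)" "?F k \<subseteq> P" for k
    using I(2,3)[OF from_nat_into[OF False]] by blast+
  obtain y where y: "inj y" "\<And>k j. y (prod_encode (k, j)) \<in> ?F k"
    "\<And>m n. f (y m) \<noteq> y n" "range y \<subseteq> P"
    using involution_avoiding_sequence[where F = ?F, OF inv F] by metis
  have avoid: "x \<in> range y \<Longrightarrow> f x \<notin> range y" for x using y(3) by auto
  obtain H where H: "range y \<subseteq> H" "\<And>x. x \<in> P \<Longrightarrow> x \<in> H \<longleftrightarrow> f x \<notin> H"
    using involution_orientation_extend[OF inv y(4) avoid] by metis
  have "infinite (S i \<inter> H)" if i: "i \<in> I" for i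
  proof -
    obtain k where k: "i = from_nat_into I k" using i I(1) by (metis from_nat_into_surj)
    have "inj (\<lambda>j. y (prod_encode (k, j)))"
      using y(1) by (auto simp: inj_def dest: inj_prod_encode[THEN injD])
    hence "infinite (range (\<lambda>j. y (prod_encode (k, j))))" by (simp add: range_inj_infinite)
    moreover have "range (\<lambda>j. y (prod_encode (k, j))) \<subseteq> S i \<inter> H" using y(2) H(1) k by auto
    ultimately show ?thesis using infinite_super by blast
  qed
  thus ?thesis using H(2) by blast
qed

lemma lin_orders_converse_eq_empty: "r \<in> lin_orders C \<Longrightarrow> r\<inverse> = r \<Longrightarrow> r = {}"
  unfolding lin_orders_def strict_linear_order_on_def trans_def irrefl_def by blast

lemma lin_orders_eq_empty_if_empty_mem:
  assumes empty: "{} \<in> lin_orders C" and r: "r \<in> lin_orders C"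
  shows "r = {}"
proof (rule equals0I)
  fix p assume "p \<in> r"
  then obtain a b where "(a, b) \<in> r" by (cases p) auto
  hence "a \<in> C" "b \<in> C" "a \<noteq> b"
    using r by (auto simp: lin_orders_def strict_linear_order_on_def irrefl_def)
  thus False using empty by (simp add: lin_orders_def strict_linear_order_on_def total_on_def)
qed

lemma lin_orders_eq_empty_if_rev_elec_fixed:
  assumes "E \<in> elections C" "rev_elec E = E" "r \<in> lin_orders C"
  shows "r = {}"
proof -
  obtain V \<pi> where E: "E = (C, V, \<pi>)" "V \<noteq> {}" "\<forall>v\<in>V. \<pi> v \<in> lin_orders C"
    using assms(1) unfolding elections_def by auto
  obtain v where v: "v \<in> V" using E(2) by blast
  have "(\<pi> v)\<inverse> = \<pi> v"
    using assms(2) E(1) by (simp add: rev_elec_def rev_order_def fun_eq_iff)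
  hence "\<pi> v = {}" using lin_orders_converse_eq_empty E(3) v by blast
  thus ?thesis using lin_orders_eq_empty_if_empty_mem E(3) v assms(3) by metis
qed

definition conflicting :: "('c election \<Rightarrow> 'c rel option) \<Rightarrow> 'c election \<Rightarrow> bool" where
  "conflicting K x \<longleftrightarrow>
     x \<in> dom K \<and> rev_elec x \<in> dom K \<and> K (rev_elec x) \<noteq> map_option rev_order (K x)"

lemma conflicting_rev_elec_iff [simp]: "conflicting K (rev_elec x) \<longleftrightarrow> conflicting K x"
  unfolding conflicting_def by (auto simp: option.map_comp comp_def option.map_ident)

lemma rev_elec_neq_if_conflicting:
  assumes "consensus C K" "conflicting K x"
  shows "rev_elec x \<noteq> x"
proof
  assume fixed: "rev_elec x = x"
  obtain u where u: "K x = Some u" using assms(2) unfolding conflicting_def by blast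
  have "x \<in> elections C" "u \<in> lin_orders C"
    using assms(1) u unfolding consensus_def by (auto intro: ranI)
  hence "rev_order u = u"
    using lin_orders_eq_empty_if_rev_elec_fixed fixed by (metis converse_empty rev_order_def)
  thus False using assms(2) u fixed unfolding conflicting_def by simp
qed

definition symmetrize :: "('c election \<Rightarrow> 'c rel option) \<Rightarrow> 'c election set \<Rightarrow>
    'c election \<Rightarrow> 'c rel option" where
  "symmetrize K A c = (if c \<in> A then K c
     else if rev_elec c \<in> A then map_option rev_order (K (rev_elec c)) else None)"

lemma symmetrize_rev_elec:
  assumes "\<And>c. c \<in> A \<Longrightarrow> rev_elec c \<in> A \<Longrightarrow> K (rev_elec c) = map_option rev_order (K c)"
  shows "symmetrize K A (rev_elec c) = map_option rev_order (symmetrize K A c)"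
  using assms[of c] by (auto simp: symmetrize_def option.map_comp comp_def option.map_ident)

definition symmetrizing_selection ::
    "('c election \<Rightarrow> 'c rel set) \<Rightarrow> ('c election \<Rightarrow> 'c rel option) \<Rightarrow> 'c election set \<Rightarrow> bool" where
  "symmetrizing_selection R K A \<longleftrightarrow> A \<subseteq> dom K \<and>
     (\<forall>c \<in> dom K. c \<in> A \<or> rev_elec c \<in> A) \<and>
     (\<forall>c \<in> A. rev_elec c \<in> A \<longrightarrow> K (rev_elec c) = map_option rev_order (K c)) \<and>
     (\<forall>b u t. K b = Some u \<longrightarrow> t \<in> R b \<longrightarrow> t \<noteq> u \<longrightarrow>
        infinite ({c. K c = Some t \<and> R c \<subseteq> R b} \<inter> A))"

context
  fixes C :: "'c set" and R K and A :: "'c election set"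
  assumes sym: "swr_rev_sym C R" and rat: "rationalizing_consensus C R K"
    and sel: "symmetrizing_selection R K A"
begin

private lemma
  shows A_dom: "A \<subseteq> dom K"
    and A_cover: "c \<in> dom K \<Longrightarrow> c \<in> A \<or> rev_elec c \<in> A"
    and A_consistent: "c \<in> A \<Longrightarrow> rev_elec c \<in> A \<Longrightarrow> K (rev_elec c) = map_option rev_order (K c)"
    and A_dense: "K b = Some u \<Longrightarrow> t \<in> R b \<Longrightarrow> t \<noteq> u \<Longrightarrow>
          infinite ({c. K c = Some t \<and> R c \<subseteq> R b} \<inter> A)"
  using sel unfolding symmetrizing_selection_def by (simp_all del: split_paired_All)

private lemma symmetrize_rev:
  "symmetrize K A (rev_elec c) = map_option rev_order (symmetrize K A c)"
  by (rule symmetrize_rev_elec) (fact A_consistent)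

lemma cons_rev_sym_symmetrize: "cons_rev_sym (symmetrize K A)"
  unfolding cons_rev_sym_def using symmetrize_rev by auto

private lemma coloured_in_elections: "K c = Some u \<Longrightarrow> c \<in> elections C \<and> u \<in> lin_orders C"
  using rationalizing_consensus_consensus[OF rat] unfolding consensus_def by (auto intro: ranI)

private lemma symmetrize_cases:
  assumes "symmetrize K A c = Some u"
  obtains (kept) "c \<in> A" "K c = Some u"
    | (reversed) s where "rev_elec c \<in> A" "K (rev_elec c) = Some s" "u = rev_order s"
  using assms by (auto simp: symmetrize_def split: if_splits)

private lemma dom_subset_dom_symmetrize: "c \<in> dom K \<Longrightarrow> c \<in> dom (symmetrize K A)"
  using A_cover[of c] A_dom by (auto simp: symmetrize_def)

private lemma symmetrize_in_elections: "symmetrize K A c = Some u \<Longrightarrow> c \<in> elections C"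
  by (erule symmetrize_cases) (auto dest: coloured_in_elections)

lemma consensus_symmetrize: "consensus C (symmetrize K A)"
  unfolding consensus_def
proof
  show "dom (symmetrize K A) \<subseteq> elections C" using symmetrize_in_elections by blast
  show "ran (symmetrize K A) \<subseteq> lin_orders C"
    by (auto simp: ran_def elim!: symmetrize_cases
        dest: coloured_in_elections intro: rev_order_in_lin_orders)
qed

private lemma symmetrize_in_R:
  assumes c: "symmetrize K A c = Some u"
  shows "u \<in> R c"
  using c
proof (cases rule: symmetrize_cases)
  case kept show ?thesis by (rule rationalizing_consensus_in_R[OF rat kept(2)])
next
  case (reversed s)
  have "s \<in> R (rev_elec c)" by (rule rationalizing_consensus_in_R[OF rat reversed(2)])
  thus ?thesis
    using reversed(3) swr_rev_symD[OF sym symmetrize_in_elections[OF c]] by auto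
qed

private lemma symmetrize_infinite:
  assumes c: "symmetrize K A c = Some u" and t: "t \<in> R c" and tu: "t \<noteq> u"
  shows "infinite {c'. symmetrize K A c' = Some t \<and> R c' \<subseteq> R c}"
  using c
proof (cases rule: symmetrize_cases)
  case kept
  have "{c'. K c' = Some t \<and> R c' \<subseteq> R c} \<inter> A \<subseteq> {c'. symmetrize K A c' = Some t \<and> R c' \<subseteq> R c}"
    by (auto simp: symmetrize_def)
  thus ?thesis using A_dense[OF kept(2) t tu] infinite_super by blast
next
  case (reversed s)
  let ?b = "rev_elec c"
  let ?T = "{x. K x = Some (rev_order t) \<and> R x \<subseteq> R ?b} \<inter> A"
  have cE: "c \<in> elections C" by (rule symmetrize_in_elections[OF c])
  have "rev_order t \<in> R ?b" using t swr_rev_symD[OF sym cE] by simp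
  moreover have "rev_order t \<noteq> s" using tu reversed(3) by auto
  ultimately have "infinite ?T" by (rule A_dense[OF reversed(2)])
  hence "infinite (rev_elec ` ?T)" by (simp add: finite_image_iff inj_on_subset[OF inj_rev_elec])
  moreover have "rev_elec ` ?T \<subseteq> {c'. symmetrize K A c' = Some t \<and> R c' \<subseteq> R c}"
  proof
    fix y assume "y \<in> rev_elec ` ?T"
    then obtain x where x: "y = rev_elec x" "K x = Some (rev_order t)" "R x \<subseteq> R ?b" "x \<in> A"
      by blast
    have "symmetrize K A y = Some t"
      using symmetrize_rev[of x] x by (simp add: symmetrize_def)
    moreover have "R y \<subseteq> R c"
      using x swr_rev_sym_subset_iff[OF sym, of x ?b] coloured_in_elections[OF x(2)] cE by simp
    ultimately show "y \<in> {c'. symmetrize K A c' = Some t \<and> R c' \<subseteq> R c}" by simp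
  qed
  ultimately show ?thesis using infinite_super by blast
qed

private lemma symmetrize_witness:
  assumes a: "a \<in> elections C" "symmetrize K A a = None" "R a \<noteq> lin_orders C" and t: "t \<in> R a"
  shows "\<exists>c. symmetrize K A c = Some t \<and> R c \<subseteq> R a"
proof -
  have "K a = None" using a(2) dom_subset_dom_symmetrize by blast
  then obtain c where c: "K c = Some t" "R c \<subseteq> R a"
    using rationalizing_consensus_witness[OF rat a(1) _ a(3) t] by blast
  then obtain u where u: "symmetrize K A c = Some u" using dom_subset_dom_symmetrize by blast
  show ?thesis
  proof (cases "u = t")
    case True thus ?thesis using u c by blast
  next
    case False
    have "t \<in> R c" by (rule rationalizing_consensus_in_R[OF rat c(1)])
    hence "infinite {c'. symmetrize K A c' = Some t \<and> R c' \<subseteq> R c}"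
      using symmetrize_infinite[OF u] False by blast
    then obtain c' where "symmetrize K A c' = Some t" "R c' \<subseteq> R c"
      using infinite_imp_nonempty by blast
    thus ?thesis using c by blast
  qed
qed

lemma rationalizing_consensus_symmetrize: "rationalizing_consensus C R (symmetrize K A)"
  unfolding rationalizing_consensus_def
  using consensus_symmetrize symmetrize_in_R symmetrize_infinite symmetrize_witness by blast

end

lemma symmetrizing_selection_orientation:
  assumes rat: "rationalizing_consensus C R K"
    and H: "\<And>x. conflicting K x \<Longrightarrow> x \<in> H \<longleftrightarrow> rev_elec x \<notin> H"
    and H_dense: "\<And>b u t. K b = Some u \<Longrightarrow> t \<in> R b \<Longrightarrow>
          infinite ({c. K c = Some t \<and> R c \<subseteq> R b} \<inter> Collect (conflicting K)) \<Longrightarrow>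
          infinite ({c. K c = Some t \<and> R c \<subseteq> R b} \<inter> Collect (conflicting K) \<inter> H)"
  shows "symmetrizing_selection R K {c \<in> dom K. conflicting K c \<longrightarrow> c \<in> H}"
    (is "symmetrizing_selection R K ?A")
  unfolding symmetrizing_selection_def
proof (intro conjI ballI allI impI)
  show "?A \<subseteq> dom K" by blast
next
  fix c assume "c \<in> dom K"
  thus "c \<in> ?A \<or> rev_elec c \<in> ?A" using H[of c] unfolding conflicting_def by auto
next
  fix c assume "c \<in> ?A" "rev_elec c \<in> ?A"
  thus "K (rev_elec c) = map_option rev_order (K c)"
    using H[of c] conflicting_rev_elec_iff[of K c] unfolding conflicting_def by auto
next
  fix b u t assume b: "K b = Some u" and t: "t \<in> R b" and tu: "t \<noteq> u"
  let ?T = "{c. K c = Some t \<and> R c \<subseteq> R b}"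
  let ?P = "Collect (conflicting K)"
  show "infinite (?T \<inter> ?A)"
  proof (cases "infinite (?T \<inter> ?P)")
    case True
    hence "infinite (?T \<inter> ?P \<inter> H)" by (rule H_dense[OF b t])
    moreover have "?T \<inter> ?P \<inter> H \<subseteq> ?T \<inter> ?A" by blast
    ultimately show ?thesis using infinite_super by blast
  next
    case False
    have "infinite ?T" by (rule rationalizing_consensus_infinite[OF rat b t tu])
    hence "infinite (?T - ?T \<inter> ?P)" using False by (intro Diff_infinite_finite) simp_all
    moreover have "?T - ?T \<inter> ?P \<subseteq> ?T \<inter> ?A" by blast
    ultimately show ?thesis using infinite_super by blast
  qed
qed

lemma symmetrizing_selection_exists:
  assumes fin: "finite C" and swr: "swr C R" and rat: "rationalizing_consensus C R K"
  shows "\<exists>A. symmetrizing_selection R K A"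
proof -
  let ?P = "Collect (conflicting K)"
  let ?S = "\<lambda>(b, t). {c. K c = Some t \<and> R c \<subseteq> R b}"
  let ?I = "{(b, t) \<in> elections C \<times> lin_orders C. infinite (?S (b, t) \<inter> ?P)}"
  have consensus: "consensus C K" by (rule rationalizing_consensus_consensus[OF rat])
  have "countable (elections C \<times> lin_orders C)"
    using countable_elections[OF fin] finite_lin_orders[OF fin] by (blast intro: countable_finite)
  hence countable: "countable ?I" by (rule countable_subset[rotated]) blast
  have inv: "x \<in> ?P \<Longrightarrow> rev_elec x \<in> ?P \<and> rev_elec (rev_elec x) = x \<and> rev_elec x \<noteq> x" for x
    using rev_elec_neq_if_conflicting[OF consensus] by simp
  have family: "i \<in> ?I \<Longrightarrow> infinite (?S i \<inter> ?P)" "?S i \<inter> ?P \<subseteq> ?P" for i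
    by auto
  obtain H where H: "\<forall>x\<in>?P. x \<in> H \<longleftrightarrow> rev_elec x \<notin> H"
    and H_dense: "\<forall>i\<in>?I. infinite (?S i \<inter> ?P \<inter> H)"
    using involution_orientation_dense[where S = "\<lambda>i. ?S i \<inter> ?P", OF inv countable family]
    by blast
  have "infinite (?S (b, t) \<inter> ?P \<inter> H)"
    if "K b = Some u" "t \<in> R b" "infinite (?S (b, t) \<inter> ?P)" for b u t
  proof -
    have "b \<in> elections C" using consensus that(1) unfolding consensus_def by blast
    moreover have "t \<in> lin_orders C" using swr that(2) \<open>b \<in> elections C\<close> by (auto simp: swr_def)
    ultimately have "(b, t) \<in> ?I" using that(3) by simp
    from bspec[OF H_dense this] show ?thesis .
  qed
  hence "symmetrizing_selection R K {c \<in> dom K. conflicting K c \<longrightarrow> c \<in> H}"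
    using H by (intro symmetrizing_selection_orientation[OF rat]) auto
  thus ?thesis by blast
qed

theorem proposition4p15:
  fixes C :: "'c set" and m :: nat
  assumes "finite C" and "card C = m"
  shows "(\<forall>K d. consensus C K \<and> cons_rev_sym K \<and> map_rev_sym C d \<longrightarrow>
            (\<forall>E\<in>elections C. rat_rule C K d (rev_elec E) = rev_order ` rat_rule C K d E))
       \<and> (\<forall>R. swr C R \<and> swr_rev_sym C R \<and> dist_rat C R \<longrightarrow>
            (\<exists>K d. dist_rat_wrt C R K d \<and> cons_rev_sym K \<and> map_rev_sym C d))"
proof (intro conjI allI impI ballI)
  fix K d E
  assume "consensus C K \<and> cons_rev_sym K \<and> map_rev_sym C d" and "E \<in> elections C"
  thus "rat_rule C K d (rev_elec E) = rev_order ` rat_rule C K d E"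
    using rat_rule_rev_elec by blast
next
  fix R assume R: "swr C R \<and> swr_rev_sym C R \<and> dist_rat C R"
  then obtain K d where "dist_rat_wrt C R K d" by (auto simp: dist_rat_def)
  hence rat: "rationalizing_consensus C R K"
    using rationalizing_consensus_if_dist_rat_wrt assms(1) R by blast
  obtain A where A: "symmetrizing_selection R K A"
    using symmetrizing_selection_exists[OF assms(1) _ rat] R by blast
  let ?K = "symmetrize K A"
  have "rationalizing_consensus C R ?K" "cons_rev_sym ?K"
    using rationalizing_consensus_symmetrize cons_rev_sym_symmetrize R rat A by blast+
  thus "\<exists>K d. dist_rat_wrt C R K d \<and> cons_rev_sym K \<and> map_rev_sym C d"
    using dist_rat_wrt_witness_distance map_rev_sym_witness_distance assms(1) R by blast
qed

end
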